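(* Let $R>0$, $s(z):=R^2-|z_1|^2-\dots-|z_n|^2$, $d\in\mathbb N^*$ and $y\in\mathcal H_d$. If $M_d(y)\succeq0$ and $M_{d-1}(sy)=0$, then $\operatorname{Tr}(M_d(y))\le y_{0,0}\sum_{l=0}^dR^{2l}$.
   Context: For $\alpha\in\mathbb N^n$, $|\alpha|=\sum\alpha_i$. $\mathcal H_d$ is the set of complex families $y=(y_{\alpha,\beta})_{|\alpha|,|\beta|\le d}$ with $\overline{y_{\alpha,\beta}}=y_{\beta,\alpha}$. For a real-valued complex polynomial $\varphi(z)=\sum_{|\gamma|,|\delta|\le l}\varphi_{\gamma,\delta}\bar z^\gamma z^\delta$ ($\overline{\varphi_{\gamma,\delta}}=\varphi_{\delta,\gamma}$) and an integer $e$ with $e+l\le d$, $M_e(\varphi y)$ is the Hermitian matrix indexed by $|\alpha|,|\beta|\le e$ with entries $\sum_{|\gamma|,|\delta|\le l}\varphi_{\gamma,\delta}y_{\alpha+\gamma,\beta+\delta}$; $M_d(y):=M_d(1\cdot y)$, i.e. entries $y_{\alpha,\beta}$. *)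

theory Defs
  imports Main "HOL-Library.Complex_Order"
begin

text \<open>Multi-indices alpha in N^n are functions 'n => nat for a finite index type 'n
  (so n = CARD('n)). |alpha| = sum of the entries.\<close>

definition mdeg :: "('n::finite \<Rightarrow> nat) \<Rightarrow> nat" where
  "mdeg \<alpha> = (\<Sum>i\<in>UNIV. \<alpha> i)"

definition midx :: "nat \<Rightarrow> ('n::finite \<Rightarrow> nat) set" where
  "midx d = {\<alpha>. mdeg \<alpha> \<le> d}"

definition madd :: "('n \<Rightarrow> nat) \<Rightarrow> ('n \<Rightarrow> nat) \<Rightarrow> ('n \<Rightarrow> nat)" where
  "madd \<alpha> \<gamma> = (\<lambda>i. \<alpha> i + \<gamma> i)"

definition munit :: "'n \<Rightarrow> ('n \<Rightarrow> nat)" where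
  "munit i = (\<lambda>j. if j = i then 1 else 0)"

definition in_H :: "nat \<Rightarrow> (('n::finite \<Rightarrow> nat) \<Rightarrow> ('n \<Rightarrow> nat) \<Rightarrow> complex) \<Rightarrow> bool" where
  "in_H d y \<longleftrightarrow> (\<forall>\<alpha>\<in>midx d. \<forall>\<beta>\<in>midx d. cnj (y \<alpha> \<beta>) = y \<beta> \<alpha>)"

definition loc_mat ::
  "nat \<Rightarrow> (('n::finite \<Rightarrow> nat) \<Rightarrow> ('n \<Rightarrow> nat) \<Rightarrow> complex) \<Rightarrow> nat
     \<Rightarrow> (('n \<Rightarrow> nat) \<Rightarrow> ('n \<Rightarrow> nat) \<Rightarrow> complex) \<Rightarrow> ('n \<Rightarrow> nat) \<Rightarrow> ('n \<Rightarrow> nat) \<Rightarrow> complex" where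
  "loc_mat l \<phi> e y \<alpha> \<beta> =
     (\<Sum>\<gamma>\<in>midx l. \<Sum>\<delta>\<in>midx l. \<phi> \<gamma> \<delta> * y (madd \<alpha> \<gamma>) (madd \<beta> \<delta>))"

definition mom_mat :: "nat \<Rightarrow> (('n::finite \<Rightarrow> nat) \<Rightarrow> ('n \<Rightarrow> nat) \<Rightarrow> complex)
     \<Rightarrow> ('n \<Rightarrow> nat) \<Rightarrow> ('n \<Rightarrow> nat) \<Rightarrow> complex" where
  "mom_mat d y \<alpha> \<beta> = y \<alpha> \<beta>"

text \<open>Positive semidefinite matrix on index set I: v^* M v >= 0 (as complex numbers,
  i.e. real and nonnegative) for all complex vectors v.\<close>
definition psd_on :: "'a set \<Rightarrow> ('a \<Rightarrow> 'a \<Rightarrow> complex) \<Rightarrow> bool" where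
  "psd_on I M \<longleftrightarrow> (\<forall>v::'a \<Rightarrow> complex. 0 \<le> (\<Sum>\<alpha>\<in>I. \<Sum>\<beta>\<in>I. cnj (v \<alpha>) * M \<alpha> \<beta> * v \<beta>))"

definition zero_on :: "'a set \<Rightarrow> ('a \<Rightarrow> 'a \<Rightarrow> complex) \<Rightarrow> bool" where
  "zero_on I M \<longleftrightarrow> (\<forall>\<alpha>\<in>I. \<forall>\<beta>\<in>I. M \<alpha> \<beta> = 0)"

definition mtrace :: "'a set \<Rightarrow> ('a \<Rightarrow> 'a \<Rightarrow> complex) \<Rightarrow> complex" where
  "mtrace I M = (\<Sum>\<alpha>\<in>I. M \<alpha> \<alpha>)"

text \<open>Coefficients of s(z) = R^2 - |z_1|^2 - ... - |z_n|^2 = R^2 zbar^0 z^0 - sum_i zbar^{e_i} z^{e_i}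
  (degree l = 1).\<close>
definition s_coeff :: "real \<Rightarrow> ('n::finite \<Rightarrow> nat) \<Rightarrow> ('n \<Rightarrow> nat) \<Rightarrow> complex" where
  "s_coeff R \<gamma> \<delta> =
     (if \<gamma> = (\<lambda>_. 0) \<and> \<delta> = (\<lambda>_. 0) then complex_of_real (R\<^sup>2)
      else if \<gamma> = \<delta> \<and> (\<exists>i. \<gamma> = munit i) then -1 else 0)"

end

theory Submission
  imports Defs "HOL-Library.FuncSet"
begin

text \<open>Reading the localizing condition on the diagonal gives
  \<open>\<Sum>\<^sub>i y(\<alpha> + e\<^sub>i, \<alpha> + e\<^sub>i) = R\<^sup>2 y(\<alpha>, \<alpha>)\<close> for \<open>|\<alpha>| < d\<close>, and the diagonal entries
  are nonnegative since \<open>M\<^sub>d(y)\<close> is positive semidefinite. Every multi-index \<open>\<beta> \<noteq> 0\<close> with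
  \<open>|\<beta>| \<le> k + 1\<close> has the form \<open>\<alpha> + e\<^sub>i\<close> with \<open>|\<alpha>| \<le> k\<close>, so the partial traces
  \<open>T k = \<Sum>{y(\<alpha>, \<alpha>) | |\<alpha>| \<le> k}\<close> satisfy \<open>T (k + 1) \<le> y(0, 0) + R\<^sup>2 T k\<close>, and
  induction on \<open>k\<close> bounds \<open>T d\<close> by the geometric sum.\<close>

lemma finite_midx: "finite (midx k :: ('n::finite \<Rightarrow> nat) set)"
proof (rule finite_subset)
  show "(midx k :: ('n \<Rightarrow> nat) set) \<subseteq> Pi UNIV (\<lambda>_. {..k})"
  proof
    fix \<alpha> :: "'n \<Rightarrow> nat" assume "\<alpha> \<in> midx k"
    then have "mdeg \<alpha> \<le> k" by (simp add: midx_def)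
    moreover have "\<alpha> i \<le> mdeg \<alpha>" for i
      unfolding mdeg_def by (rule member_le_sum) auto
    ultimately have "\<alpha> i \<le> k" for i
      using order_trans by blast
    then show "\<alpha> \<in> Pi UNIV (\<lambda>_. {..k})" by (simp add: Pi_iff)
  qed
  show "finite (Pi UNIV (\<lambda>_::'n. {..k}))"
    by (metis PiE_UNIV_domain finite_PiE finite_UNIV finite_atMost)
qed

lemma mdeg_zero [simp]: "mdeg (\<lambda>_::'n::finite. 0::nat) = 0"
  by (simp add: mdeg_def)

lemma mdeg_munit [simp]: "mdeg (munit i :: 'n::finite \<Rightarrow> nat) = 1"
  by (simp add: mdeg_def munit_def)

lemma mdeg_madd [simp]: "mdeg (madd \<alpha> \<beta>) = mdeg \<alpha> + mdeg (\<beta> :: 'n::finite \<Rightarrow> nat)"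
  by (simp add: mdeg_def madd_def sum.distrib)

lemma madd_zero [simp]: "madd \<alpha> (\<lambda>_. 0) = \<alpha>"
  by (simp add: madd_def)

lemma munit_neq_zero [simp]: "munit i \<noteq> (\<lambda>_. 0)"
  by (metis munit_def one_neq_zero)

lemma zero_notin_range_munit [simp]: "(\<lambda>_. 0) \<notin> range munit"
  by (metis munit_neq_zero rangeE)

lemma inj_munit: "inj munit"
  by (rule injI) (metis munit_def one_neq_zero)

lemma zero_in_midx [simp]: "(\<lambda>_. 0) \<in> midx k"
  by (simp add: midx_def)

lemma midx_0: "midx 0 = {\<lambda>_::'n::finite. 0}"
  by (auto simp: midx_def mdeg_def)

lemma midx_1: "midx 1 = insert (\<lambda>_. 0) (range (munit :: 'n::finite \<Rightarrow> _))"
proof (intro equalityI subsetI)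
  fix \<gamma> :: "'n \<Rightarrow> nat" assume "\<gamma> \<in> midx 1"
  then have deg: "(\<Sum>j\<in>UNIV. \<gamma> j) \<le> 1" by (simp add: midx_def mdeg_def)
  show "\<gamma> \<in> insert (\<lambda>_. 0) (range munit)"
  proof (cases "\<gamma> = (\<lambda>_. 0)")
    case False
    then obtain i where i: "\<gamma> i \<noteq> 0" by auto
    have "\<gamma> i + (\<Sum>j\<in>UNIV - {i}. \<gamma> j) \<le> 1"
      using deg by (simp add: sum.remove[of UNIV i])
    moreover have "\<gamma> j \<le> (\<Sum>j\<in>UNIV - {i}. \<gamma> j)" if "j \<noteq> i" for j
      using that by (intro member_le_sum) auto
    ultimately have "\<gamma> = munit i"
      using i by (fastforce simp: munit_def)
    then show ?thesis by blast
  qed simp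
qed (auto simp: midx_def)

lemma sum_midx_Suc_le:
  fixes t :: "('n::finite \<Rightarrow> nat) \<Rightarrow> real"
  assumes nonneg: "\<And>\<alpha>. \<alpha> \<in> midx (Suc k) \<Longrightarrow> 0 \<le> t \<alpha>"
  shows "(\<Sum>\<beta>\<in>midx (Suc k). t \<beta>) \<le> t (\<lambda>_. 0) + (\<Sum>\<alpha>\<in>midx k. \<Sum>i\<in>UNIV. t (madd \<alpha> (munit i)))"
proof -
  define shift where "shift p = madd (fst p) (munit (snd p))" for p :: "('n \<Rightarrow> nat) \<times> 'n"
  have fin: "finite (midx k \<times> (UNIV :: 'n set))"
    by (simp add: finite_midx)
  have shift_into: "shift ` (midx k \<times> UNIV) \<subseteq> midx (Suc k)"
    by (auto simp: shift_def midx_def)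
  have shift_onto: "midx (Suc k) - {\<lambda>_. 0} \<subseteq> shift ` (midx k \<times> UNIV)"
  proof
    fix \<beta> :: "'n \<Rightarrow> nat" assume \<beta>: "\<beta> \<in> midx (Suc k) - {\<lambda>_. 0}"
    then obtain i where i: "\<beta> i \<noteq> 0" by auto
    define \<alpha> where "\<alpha> = \<beta>(i := \<beta> i - 1)"
    have "madd \<alpha> (munit i) = \<beta>"
      using i by (auto simp: madd_def munit_def \<alpha>_def)
    moreover from this have "\<alpha> \<in> midx k"
      using \<beta> by (metis DiffD1 mdeg_madd mdeg_munit mem_Collect_eq midx_def Suc_eq_plus1 Suc_le_mono)
    ultimately show "\<beta> \<in> shift ` (midx k \<times> UNIV)"
      by (force simp: shift_def)
  qed
  have "(\<Sum>\<beta>\<in>midx (Suc k). t \<beta>) = t (\<lambda>_. 0) + (\<Sum>\<beta>\<in>midx (Suc k) - {\<lambda>_. 0}. t \<beta>)"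
    by (rule sum.remove[OF finite_midx zero_in_midx])
  also have "(\<Sum>\<beta>\<in>midx (Suc k) - {\<lambda>_. 0}. t \<beta>) \<le> (\<Sum>\<beta>\<in>shift ` (midx k \<times> UNIV). t \<beta>)"
    using shift_onto shift_into fin by (intro sum_mono2) (auto intro: nonneg)
  also have "\<dots> \<le> (\<Sum>p\<in>midx k \<times> UNIV. t (shift p))"
    using sum_image_le[OF fin, of t shift] shift_into nonneg by (auto simp: o_def)
  also have "\<dots> = (\<Sum>\<alpha>\<in>midx k. \<Sum>i\<in>UNIV. t (madd \<alpha> (munit i)))"
    by (simp add: shift_def sum.cartesian_product case_prod_beta)
  finally show ?thesis by simp
qed

lemma sum_midx_le_geometric:
  fixes t :: "('n::finite \<Rightarrow> nat) \<Rightarrow> real"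
  assumes "c \<ge> 0" and "k \<le> d"
    and nonneg: "\<And>\<alpha>. \<alpha> \<in> midx d \<Longrightarrow> 0 \<le> t \<alpha>"
    and balance: "\<And>\<alpha>. \<alpha> \<in> midx (d - 1) \<Longrightarrow> (\<Sum>i\<in>UNIV. t (madd \<alpha> (munit i))) \<le> c * t \<alpha>"
  shows "(\<Sum>\<alpha>\<in>midx k. t \<alpha>) \<le> t (\<lambda>_. 0) * (\<Sum>l=0..k. c ^ l)"
  using \<open>k \<le> d\<close>
proof (induction k)
  case 0
  show ?case by (simp add: midx_0)
next
  case (Suc k)
  have "midx (Suc k) \<subseteq> midx d" "midx k \<subseteq> midx (d - 1)"
    using Suc.prems by (auto simp: midx_def)
  then have "(\<Sum>\<alpha>\<in>midx (Suc k). t \<alpha>)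
      \<le> t (\<lambda>_. 0) + (\<Sum>\<alpha>\<in>midx k. \<Sum>i\<in>UNIV. t (madd \<alpha> (munit i)))"
    by (intro sum_midx_Suc_le nonneg) blast
  also have "\<dots> \<le> t (\<lambda>_. 0) + (\<Sum>\<alpha>\<in>midx k. c * t \<alpha>)"
    using \<open>midx k \<subseteq> midx (d - 1)\<close> by (intro add_left_mono sum_mono balance) blast
  also have "\<dots> \<le> t (\<lambda>_. 0) + c * (t (\<lambda>_. 0) * (\<Sum>l=0..k. c ^ l))"
    using Suc \<open>c \<ge> 0\<close> by (simp add: sum_distrib_left[symmetric] mult_left_mono)
  also have "\<dots> = t (\<lambda>_. 0) * (\<Sum>l=0..Suc k. c ^ l)"
    by (simp only: sum.atLeast0_atMost_Suc_shift o_def power_0 power_Suc)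
      (simp add: sum_distrib_left algebra_simps)
  finally show ?case .
qed

lemma psd_on_diag_nonneg:
  assumes "psd_on I M" and "finite I" and "a \<in> I"
  shows "0 \<le> M a a"
proof -
  define v :: "_ \<Rightarrow> complex" where "v x = (if x = a then 1 else 0)" for x
  have "0 \<le> (\<Sum>\<alpha>\<in>I. \<Sum>\<beta>\<in>I. cnj (v \<alpha>) * M \<alpha> \<beta> * v \<beta>)"
    using assms(1) unfolding psd_on_def by blast
  also have "\<dots> = (\<Sum>\<alpha>\<in>I. \<Sum>\<beta>\<in>I. if \<beta> = a then if \<alpha> = a then M \<alpha> \<beta> else 0 else 0)"
    by (intro sum.cong refl) (simp add: v_def)
  also have "\<dots> = M a a"
    using assms(2,3) by simp
  finally show ?thesis .
qed

lemma s_coeff_offdiag: "\<gamma> \<noteq> \<delta> \<Longrightarrow> s_coeff R \<gamma> \<delta> = 0"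
  by (auto simp: s_coeff_def)

lemma s_coeff_zero [simp]: "s_coeff R (\<lambda>_. 0) (\<lambda>_. 0) = complex_of_real (R\<^sup>2)"
  by (simp add: s_coeff_def)

lemma s_coeff_munit [simp]: "s_coeff R (munit i) (munit i) = -1"
  by (auto simp: s_coeff_def)

lemma loc_mat_s_coeff:
  fixes y :: "('n::finite \<Rightarrow> nat) \<Rightarrow> ('n \<Rightarrow> nat) \<Rightarrow> complex"
  shows "loc_mat 1 (s_coeff R) e y \<alpha> \<beta> =
    complex_of_real (R\<^sup>2) * y \<alpha> \<beta> - (\<Sum>i\<in>UNIV. y (madd \<alpha> (munit i)) (madd \<beta> (munit i)))"
proof -
  define f where "f \<gamma> = y (madd \<alpha> \<gamma>) (madd \<beta> \<gamma>)" for \<gamma>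
  have "loc_mat 1 (s_coeff R) e y \<alpha> \<beta> = (\<Sum>\<gamma>\<in>midx 1. s_coeff R \<gamma> \<gamma> * f \<gamma>)"
    unfolding loc_mat_def f_def
  proof (intro sum.cong refl)
    fix \<gamma> :: "'n \<Rightarrow> nat" assume "\<gamma> \<in> midx 1"
    have "(\<Sum>\<delta>\<in>midx 1. s_coeff R \<gamma> \<delta> * y (madd \<alpha> \<gamma>) (madd \<beta> \<delta>))
        = (\<Sum>\<delta>\<in>midx 1. if \<delta> = \<gamma> then s_coeff R \<gamma> \<gamma> * y (madd \<alpha> \<gamma>) (madd \<beta> \<gamma>) else 0)"
      by (intro sum.cong refl) (auto simp: s_coeff_offdiag)
    then show "(\<Sum>\<delta>\<in>midx 1. s_coeff R \<gamma> \<delta> * y (madd \<alpha> \<gamma>) (madd \<beta> \<delta>))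
        = s_coeff R \<gamma> \<gamma> * y (madd \<alpha> \<gamma>) (madd \<beta> \<gamma>)"
      using \<open>\<gamma> \<in> midx 1\<close> by (simp add: finite_midx)
  qed
  also have "\<dots> = complex_of_real (R\<^sup>2) * f (\<lambda>_. 0) - (\<Sum>i\<in>UNIV. f (munit i))"
    unfolding midx_1 by (simp add: sum.reindex[OF inj_munit] sum_negf)
  finally show ?thesis by (simp add: f_def)
qed

theorem mainTheorem8:
  fixes R :: real and d :: nat
    and y :: "('n::finite \<Rightarrow> nat) \<Rightarrow> ('n \<Rightarrow> nat) \<Rightarrow> complex"
  assumes "R > 0" and "d \<ge> 1" and "in_H d y"
    and "psd_on (midx d) (mom_mat d y)"
    and "zero_on (midx (d - 1)) (loc_mat 1 (s_coeff R) (d - 1) y)"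
  shows "mtrace (midx d) (mom_mat d y)
           \<le> y (\<lambda>_. 0) (\<lambda>_. 0) * complex_of_real (\<Sum>l=0..d. R ^ (2 * l))"
proof -
  have diag: "0 \<le> y \<alpha> \<alpha>" if "\<alpha> \<in> midx d" for \<alpha>
    using psd_on_diag_nonneg[OF assms(4) finite_midx that] by (simp add: mom_mat_def)
  then have diag_real: "y \<alpha> \<alpha> = complex_of_real (Re (y \<alpha> \<alpha>))" if "\<alpha> \<in> midx d" for \<alpha>
    using that by (simp add: complex_eq_iff less_eq_complex_def)
  have balance: "(\<Sum>i\<in>UNIV. Re (y (madd \<alpha> (munit i)) (madd \<alpha> (munit i)))) = R\<^sup>2 * Re (y \<alpha> \<alpha>)"
    if "\<alpha> \<in> midx (d - 1)" for \<alpha>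
  proof -
    have "loc_mat 1 (s_coeff R) (d - 1) y \<alpha> \<alpha> = 0"
      using assms(5) that by (simp add: zero_on_def)
    then show ?thesis
      using arg_cong[where f = Re, OF loc_mat_s_coeff[of R "d - 1" y \<alpha> \<alpha>]] by simp
  qed
  have "(\<Sum>\<alpha>\<in>midx d. Re (y \<alpha> \<alpha>)) \<le> Re (y (\<lambda>_. 0) (\<lambda>_. 0)) * (\<Sum>l=0..d. (R\<^sup>2) ^ l)"
    using diag balance by (intro sum_midx_le_geometric) (auto simp: less_eq_complex_def)
  moreover have "mtrace (midx d) (mom_mat d y) = complex_of_real (\<Sum>\<alpha>\<in>midx d. Re (y \<alpha> \<alpha>))"
    unfolding mtrace_def mom_mat_def of_real_sum by (intro sum.cong refl diag_real)
  ultimately show ?thesis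
    using diag_real[of "\<lambda>_. 0"] diag[of "\<lambda>_. 0"] by (simp add: less_eq_complex_def power_mult)
qed

end
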